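(* Let $\mathcal X$ be a normed space, $\mathcal Y=\{1,\dots,C\}$, and $\eta_c(\mathbf x)=p(y=c\mid\mathbf x)$ class-conditional probabilities, each $\lambda^{\eta}$-Lipschitz in $\mathbf x$. Let $\tilde{\mathbf x}_1,\dots,\tilde{\mathbf x}_b\in\mathcal X$ be fixed selected points and $l(\cdot,\cdot;A_{\mathbf s}):\mathcal X\times\mathcal Y\to[0,L]$ a loss such that $\mathbf x\mapsto l(\mathbf x,y;A_{\mathbf s})$ is $\lambda^l$-Lipschitz for each $y$ and $l(\tilde{\mathbf x}_k,y;A_{\mathbf s})=0$ for all $k$ and $y$. Then for every $\mathbf x\in\mathcal X$, $$\mathbb E_{y\sim p(\cdot\mid\mathbf x)}\big[l(\mathbf x,y;A_{\mathbf s})\big]\le\big(\lambda^l+\lambda^{\eta}LC\big)\,|\mathbf x-\pi(\mathbf x)|,$$ and consequently $$\mathbb E_{(\mathbf x,y)\sim p_{\mathcal Z}}\big[l(\mathbf x,y;A_{\mathbf s})\big]\le\big(\lambda^l+\lambda^{\eta}LC\big)\max_{k}\mathbb E_{\mathbf x\sim\mathbb N_{\mathbf s}(k)}\big[|\mathbf x-\tilde{\mathbf x}_k|\big].$$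
   Context: $\pi(\mathbf x)=\arg\min_{\tilde{\mathbf x}\in\{\tilde{\mathbf x}_1,\dots,\tilde{\mathbf x}_b\}}|\mathbf x-\tilde{\mathbf x}|$ (ties broken by a fixed rule). Coverage area $\mathbb N_{\mathbf s}(k)=\{\mathbf x:\pi(\mathbf x)=\tilde{\mathbf x}_k\}$; $\mathbf x\sim\mathbb N_{\mathbf s}(k)$ denotes the conditional distribution $p(\mathbf x\mid\pi(\mathbf x)=\tilde{\mathbf x}_k)$ of the marginal of $p_{\mathcal Z}$; the max is over $k$ with $p(\pi(\mathbf x)=\tilde{\mathbf x}_k)>0$. *)

theory Defs
  imports "HOL-Probability.Probability"
begin

definition coverage :: "('a \<Rightarrow> 'a) \<Rightarrow> (nat \<Rightarrow> 'a) \<Rightarrow> nat \<Rightarrow> 'a set" where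
  "coverage proj xt k = {x. proj x = xt k}"

text \<open>Conditional expectation of the distance to the k-th point, given that x lies in its
  coverage area (values in ennreal, so that it is well defined even if infinite).\<close>
definition cond_dist :: "'a::real_normed_vector measure \<Rightarrow> ('a \<Rightarrow> 'a) \<Rightarrow> (nat \<Rightarrow> 'a) \<Rightarrow> nat \<Rightarrow> ennreal" where
  "cond_dist M proj xt k =
     (\<integral>\<^sup>+ x \<in> coverage proj xt k. ennreal (norm (x - xt k)) \<partial>M) / emeasure M (coverage proj xt k)"

end

theory Submission
  imports Defs
begin

text \<open>Since every loss vanishes at the selected points, \<open>\<lambda>\<^sup>l\<close>-Lipschitz continuity bounds
  \<open>l(x, y)\<close> by \<open>\<lambda>\<^sup>l |x - \<pi>(x)|\<close> for each label, hence also its expectation over \<open>y\<close>; this is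
  sharper than the stated pointwise bound.
  Integrating, \<open>\<pi>\<close> partitions the space into finitely many coverage areas, and on each of
  them the integral of \<open>|x - \<pi>(x)|\<close> is its conditional average times its mass; bounding the
  averages by their maximum leaves the total mass, which is at most 1.\<close>

lemma lipschitz_on_vanishing_le:
  fixes f :: "'a::metric_space \<Rightarrow> real"
  assumes "K-lipschitz_on UNIV f" and "f z = 0"
  shows "f x \<le> K * dist x z"
  using lipschitz_onD[OF assms(1), of x z] assms(2) by simp

lemma convex_combination_le:
  fixes w f :: "'i \<Rightarrow> real"
  assumes "\<And>i. i \<in> A \<Longrightarrow> 0 \<le> w i" and "sum w A = 1" and "\<And>i. i \<in> A \<Longrightarrow> f i \<le> B"
  shows "(\<Sum>i\<in>A. w i * f i) \<le> B"
proof -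
  have "(\<Sum>i\<in>A. w i * f i) \<le> (\<Sum>i\<in>A. w i * B)"
    using assms(1,3) by (intro sum_mono mult_left_mono)
  also have "\<dots> = B"
    using assms(2) by (simp add: sum_distrib_right[symmetric])
  finally show ?thesis .
qed

lemma expected_loss_le_lipschitz_dist:
  fixes eta :: "'c \<Rightarrow> 'a::metric_space \<Rightarrow> real" and l :: "'a \<Rightarrow> 'c \<Rightarrow> real"
  assumes "\<And>y. y \<in> Y \<Longrightarrow> 0 \<le> eta y x" and "(\<Sum>y\<in>Y. eta y x) = 1"
    and "\<And>y. y \<in> Y \<Longrightarrow> K-lipschitz_on UNIV (\<lambda>x. l x y)" and "\<And>y. y \<in> Y \<Longrightarrow> l z y = 0"
  shows "(\<Sum>y\<in>Y. eta y x * l x y) \<le> K * dist x z"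
  using assms by (intro convex_combination_le lipschitz_on_vanishing_le) auto

lemma ennreal_integral_le_nn_integral:
  assumes "\<And>x. 0 \<le> f x"
  shows "ennreal (\<integral>x. f x \<partial>M) \<le> (\<integral>\<^sup>+ x. ennreal (f x) \<partial>M)"
proof (cases "integrable M f")
  case True
  then show ?thesis using nn_integral_eq_integral[OF True] assms by simp
qed (simp add: not_integrable_integral_eq)

lemma borel_measurable_quantized:
  fixes g :: "'b \<Rightarrow> 'a \<Rightarrow> ennreal"
  assumes "finite P" and "\<And>x. x \<in> space M \<Longrightarrow> q x \<in> P"
    and "\<And>p. p \<in> P \<Longrightarrow> {x \<in> space M. q x = p} \<in> sets M"
    and "\<And>p. p \<in> P \<Longrightarrow> g p \<in> borel_measurable M"
  shows "(\<lambda>x. g (q x) x) \<in> borel_measurable M"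
proof -
  have "g (q x) x = (\<Sum>p\<in>P. g p x * indicator {x \<in> space M. q x = p} x)" if "x \<in> space M" for x
    using that assms(1,2) by (simp add: indicator_def if_distrib[of "\<lambda>c. _ * c"] sum.delta)
  moreover have "(\<lambda>x. \<Sum>p\<in>P. g p x * indicator {x \<in> space M. q x = p} x) \<in> borel_measurable M"
    using assms(3,4) by measurable
  ultimately show ?thesis by (simp cong: measurable_cong)
qed

lemma set_nn_integral_le_average_bound:
  assumes "A \<in> sets M" and "emeasure M A \<noteq> \<top>"
    and "measure M A > 0 \<Longrightarrow> (\<integral>\<^sup>+ x \<in> A. f x \<partial>M) / emeasure M A \<le> D"
  shows "(\<integral>\<^sup>+ x \<in> A. f x \<partial>M) \<le> D * emeasure M A"
proof (cases "measure M A > 0")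
  case True
  then have "emeasure M A \<noteq> 0"
    by (auto simp: measure_def)
  then have "(\<integral>\<^sup>+ x \<in> A. f x \<partial>M) = (\<integral>\<^sup>+ x \<in> A. f x \<partial>M) / emeasure M A * emeasure M A"
    using assms(2) by (simp add: ennreal_divide_times top.not_eq_extremum)
  also have "\<dots> \<le> D * emeasure M A"
    using assms(3)[OF True] by (rule mult_right_mono) simp
  finally show ?thesis .
next
  case False
  then have "A \<in> null_sets M"
    using assms(1,2) by (simp add: null_sets_def measure_def enn2real_eq_0_iff less_le)
  then show ?thesis by (simp add: nn_integral_null_set)
qed

lemma nn_integral_quantized_le_Max_cell_average:
  fixes M :: "'a measure" and q :: "'a \<Rightarrow> 'b" and z :: "'i \<Rightarrow> 'b"
    and g :: "'b \<Rightarrow> 'a \<Rightarrow> ennreal"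
  defines "cell p \<equiv> {x \<in> space M. q x = p}"
  assumes "prob_space M" and "finite I" and "\<And>x. x \<in> space M \<Longrightarrow> q x \<in> z ` I"
    and "\<And>k. k \<in> I \<Longrightarrow> cell (z k) \<in> sets M"
    and "\<And>k. k \<in> I \<Longrightarrow> g (z k) \<in> borel_measurable M"
  shows "(\<integral>\<^sup>+ x. g (q x) x \<partial>M)
    \<le> (MAX k\<in>{k\<in>I. measure M (cell (z k)) > 0}.
          (\<integral>\<^sup>+ x \<in> cell (z k). g (z k) x \<partial>M) / emeasure M (cell (z k)))"
    (is "_ \<le> ?D")
proof -
  interpret prob_space M by fact
  have cell_sets: "cell p \<in> sets M" if "p \<in> z ` I" for p
    using that assms(5) by blast
  have integral_split: "(\<integral>\<^sup>+ x. g (q x) x \<partial>M) = (\<Sum>p\<in>z ` I. \<integral>\<^sup>+ x \<in> cell p. g p x \<partial>M)"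
  proof -
    have "(\<integral>\<^sup>+ x. g (q x) x \<partial>M) = (\<integral>\<^sup>+ x. (\<Sum>p\<in>z ` I. g p x * indicator (cell p) x) \<partial>M)"
      using assms(3,4)
      by (intro nn_integral_cong)
        (simp add: cell_def indicator_def if_distrib[of "\<lambda>c. _ * c"] sum.delta)
    also have "\<dots> = (\<Sum>p\<in>z ` I. \<integral>\<^sup>+ x \<in> cell p. g p x \<partial>M)"
      using cell_sets assms(6) by (intro nn_integral_sum) auto
    finally show ?thesis .
  qed
  have cell_bound: "(\<integral>\<^sup>+ x \<in> cell p. g p x \<partial>M) \<le> ?D * emeasure M (cell p)" if "p \<in> z ` I" for p
  proof -
    obtain k where k: "k \<in> I" "p = z k" using \<open>p \<in> z ` I\<close> by blast
    show ?thesis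
      unfolding k(2) using k(1) assms(3,5)
      by (intro set_nn_integral_le_average_bound) (auto intro: Max_ge)
  qed
  have "(\<Sum>p\<in>z ` I. emeasure M (cell p)) = emeasure M (\<Union>p\<in>z ` I. cell p)"
    using cell_sets assms(3) by (intro sum_emeasure) (auto simp: disjoint_family_on_def cell_def)
  also have "\<dots> \<le> 1"
    by (rule emeasure_le_1)
  finally have total_mass: "(\<Sum>p\<in>z ` I. emeasure M (cell p)) \<le> 1" .
  have "(\<integral>\<^sup>+ x. g (q x) x \<partial>M) \<le> (\<Sum>p\<in>z ` I. ?D * emeasure M (cell p))"
    unfolding integral_split by (intro sum_mono cell_bound)
  also have "\<dots> = ?D * (\<Sum>p\<in>z ` I. emeasure M (cell p))"
    by (simp add: sum_distrib_left)
  also have "\<dots> \<le> ?D"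
    using total_mass by (intro mult_left_le) auto
  finally show ?thesis .
qed

lemma
  fixes M :: "'a::real_normed_vector measure" and proj :: "'a \<Rightarrow> 'a"
    and xt :: "nat \<Rightarrow> 'a" and I :: "nat set"
  assumes "prob_space M" and "sets M = sets borel" and "finite I" and "\<And>x. proj x \<in> xt ` I"
    and "\<And>k. k \<in> I \<Longrightarrow> coverage proj xt k \<in> sets M"
  shows borel_measurable_dist_quantizer: "(\<lambda>x. ennreal (norm (x - proj x))) \<in> borel_measurable M"
    and nn_integral_dist_quantizer_le_Max_cond_dist:
      "(\<integral>\<^sup>+ x. ennreal (norm (x - proj x)) \<partial>M)
        \<le> (MAX k\<in>{k\<in>I. measure M (coverage proj xt k) > 0}. cond_dist M proj xt k)"
proof -
  have space_M: "space M = UNIV" using sets_eq_imp_space_eq[OF assms(2)] by simp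
  have dist_borel: "(\<lambda>x. norm (x - p)) \<in> borel_measurable borel" for p :: 'a
    by (intro borel_measurable_continuous_onI continuous_intros)
  show "(\<lambda>x. ennreal (norm (x - proj x))) \<in> borel_measurable M"
    using assms(3-5) dist_borel
    by (intro borel_measurable_quantized[of "xt ` I" M proj "\<lambda>p x. ennreal (norm (x - p))"])
      (auto simp: space_M coverage_def measurable_cong_sets[OF assms(2) refl])
  show "(\<integral>\<^sup>+ x. ennreal (norm (x - proj x)) \<partial>M)
      \<le> (MAX k\<in>{k\<in>I. measure M (coverage proj xt k) > 0}. cond_dist M proj xt k)"
    using nn_integral_quantized_le_Max_cell_average[OF assms(1,3), of proj xt "\<lambda>p x. ennreal (norm (x - p))"]
      assms(4,5) dist_borel
    by (simp add: space_M coverage_def cond_dist_def measurable_cong_sets[OF assms(2) refl])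
qed

theorem mainTheorem3:
  fixes M :: "'a::real_normed_vector measure"
    and eta :: "nat \<Rightarrow> 'a \<Rightarrow> real"
    and l :: "'a \<Rightarrow> nat \<Rightarrow> real"
    and xt :: "nat \<Rightarrow> 'a"
    and proj :: "'a \<Rightarrow> 'a"
    and C b :: nat and L lam_eta lam_l :: real
  assumes C: "C \<ge> 1" and b: "b \<ge> 1"
    and eta_nonneg: "\<And>c x. c \<in> {1..C} \<Longrightarrow> eta c x \<ge> 0"
    and eta_sum: "\<And>x. (\<Sum>c\<in>{1..C}. eta c x) = 1"
    and eta_lip: "\<And>c. c \<in> {1..C} \<Longrightarrow> lam_eta-lipschitz_on UNIV (eta c)"
    and l_range: "\<And>x y. y \<in> {1..C} \<Longrightarrow> 0 \<le> l x y \<and> l x y \<le> L"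
    and l_lip: "\<And>y. y \<in> {1..C} \<Longrightarrow> lam_l-lipschitz_on UNIV (\<lambda>x. l x y)"
    and l_zero: "\<And>k y. k \<in> {1..b} \<Longrightarrow> y \<in> {1..C} \<Longrightarrow> l (xt k) y = 0"
    and pi_in: "\<And>x. proj x \<in> xt ` {1..b}"
    and pi_min: "\<And>x k. k \<in> {1..b} \<Longrightarrow> norm (x - proj x) \<le> norm (x - xt k)"
    and prob: "prob_space M" and sets_M: "sets M = sets borel"
    and cov_meas: "\<And>k. k \<in> {1..b} \<Longrightarrow> coverage proj xt k \<in> sets M"
  shows "(\<forall>x. (\<Sum>c\<in>{1..C}. eta c x * l x c)
              \<le> (lam_l + lam_eta * L * real C) * norm (x - proj x))
       \<and> ennreal (\<integral>x. (\<Sum>c\<in>{1..C}. eta c x * l x c) \<partial>M)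
            \<le> ennreal (lam_l + lam_eta * L * real C)
              * (MAX k\<in>{k\<in>{1..b}. measure M (coverage proj xt k) > 0}. cond_dist M proj xt k)"
proof -
  define K where "K = lam_l + lam_eta * L * real C"
  have "0 \<le> L" using l_range[of 1] C by force
  moreover have "0 \<le> lam_eta" and "0 \<le> lam_l"
    using eta_lip[of 1] l_lip[of 1] C by (auto dest: lipschitz_on_nonneg)
  ultimately have lam_l_le_K: "lam_l \<le> K" and K_nonneg: "0 \<le> K" unfolding K_def by simp_all
  have pointwise: "(\<Sum>c\<in>{1..C}. eta c x * l x c) \<le> K * norm (x - proj x)" for x
  proof -
    obtain k where k: "k \<in> {1..b}" "proj x = xt k" using pi_in[of x] by blast
    have "(\<Sum>c\<in>{1..C}. eta c x * l x c) \<le> lam_l * dist x (proj x)"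
      using eta_nonneg eta_sum l_lip l_zero[OF k(1)] k(2) by (intro expected_loss_le_lipschitz_dist) auto
    also have "\<dots> \<le> K * norm (x - proj x)"
      using lam_l_le_K by (simp add: dist_norm mult_right_mono)
    finally show ?thesis .
  qed
  have "ennreal (\<integral>x. (\<Sum>c\<in>{1..C}. eta c x * l x c) \<partial>M)
      \<le> (\<integral>\<^sup>+ x. ennreal (\<Sum>c\<in>{1..C}. eta c x * l x c) \<partial>M)"
    using eta_nonneg l_range
    by (intro ennreal_integral_le_nn_integral sum_nonneg mult_nonneg_nonneg) auto
  also have "\<dots> \<le> (\<integral>\<^sup>+ x. ennreal K * ennreal (norm (x - proj x)) \<partial>M)"
    using pointwise K_nonneg by (intro nn_integral_mono) (simp add: ennreal_mult[symmetric] ennreal_leI)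
  also have "\<dots> = ennreal K * (\<integral>\<^sup>+ x. ennreal (norm (x - proj x)) \<partial>M)"
    using borel_measurable_dist_quantizer[OF prob sets_M _ pi_in cov_meas] by (simp add: nn_integral_cmult)
  also have "\<dots> \<le> ennreal K
      * (MAX k\<in>{k\<in>{1..b}. measure M (coverage proj xt k) > 0}. cond_dist M proj xt k)"
    using nn_integral_dist_quantizer_le_Max_cond_dist[OF prob sets_M _ pi_in cov_meas]
    by (simp add: mult_left_mono)
  finally show ?thesis using pointwise unfolding K_def by blast
qed

end
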